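(* Let $F_n$ be a probability distribution function on $\mathbb{R}$ satisfying $F_n(x+t)-F_n(x)\le Mt$ for all $x\ge0$, $t>0$, for some constant $M<\infty$. Let $y_n^*\ge0$, and define $q_n=F_n(y_n^* )-F_n(0)$ and $L_n=\int_0^{y_n^*}x(y_n^*-x)\,dF_n(x)$. Then $$L_n\ge\frac{q_n^3}{27M^2}.$$ *)

theory Defs
  imports "HOL-Probability.Probability"
begin

end

theory Submission
  imports Defs
begin

text \<open>Put \<open>q = F(y) - F(0)\<close> and \<open>a = q / (3 M)\<close>. The bound on the increments of \<open>F\<close> leaves
  at most \<open>M a = q / 3\<close> of the mass \<open>q\<close> in each of \<open>[0, a]\<close> and \<open>(y - a, y]\<close>, so the interval
  \<open>(a, y - a]\<close> carries mass at least \<open>q / 3\<close>. There the weight \<open>x (y - x)\<close> is at least \<open>a\<^sup>2\<close>,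
  whence the integral is at least \<open>(q / 3) a\<^sup>2 = q\<^sup>3 / (27 M\<^sup>2)\<close>.\<close>

lemma (in finite_measure) const_mult_measure_le_set_integral:
  fixes f :: "'a \<Rightarrow> real"
  assumes "set_integrable M A f" "B \<in> sets M" "B \<subseteq> A"
    and "\<And>x. x \<in> A \<Longrightarrow> 0 \<le> f x" "\<And>x. x \<in> B \<Longrightarrow> c \<le> f x"
  shows "c * measure M B \<le> (\<integral>x\<in>A. f x \<partial>M)"
proof -
  have "c * measure M B = (\<integral>x. indicator B x * c \<partial>M)"
    using \<open>B \<in> sets M\<close> by (simp add: Int_absorb2 sets.sets_into_space)
  also have "\<dots> \<le> (\<integral>x. indicator A x * f x \<partial>M)"
  proof (rule integral_mono)
    show "integrable M (\<lambda>x. indicator B x * c)"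
      using \<open>B \<in> sets M\<close>
      by (simp add: integrable_indicator_iff Int_absorb2 sets.sets_into_space less_top[symmetric])
    show "integrable M (\<lambda>x. indicator A x * f x)"
      using assms(1) by (simp add: set_integrable_def)
    show "indicator B x * c \<le> indicator A x * f x" for x
      using assms(3-5) by (auto simp: indicator_def)
  qed
  finally show ?thesis
    by (simp add: set_lebesgue_integral_def)
qed

lemma (in real_distribution) cdf_increment_le:
  assumes "\<And>x t. x \<ge> 0 \<Longrightarrow> t > 0 \<Longrightarrow> cdf M (x + t) - cdf M x \<le> L * t"
    and "x \<ge> 0" "t \<ge> 0"
  shows "cdf M (x + t) - cdf M x \<le> L * t"
  using assms by (cases "t = 0") auto

lemma (in real_distribution) measure_Ioc_inner_ge:
  assumes "\<And>x t. x \<ge> 0 \<Longrightarrow> t > 0 \<Longrightarrow> cdf M (x + t) - cdf M x \<le> L * t"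
    and "0 \<le> a" "2 * a \<le> y"
  shows "cdf M y - cdf M 0 - 2 * L * a \<le> measure M {a<..y - a}"
proof -
  have "measure M {a<..y - a} = cdf M (y - a) - cdf M a"
    using cdf_diff_eq[of a "y - a"] assms(3) by (cases "2 * a = y") auto
  moreover have "cdf M a - cdf M 0 \<le> L * a"
    using cdf_increment_le[OF assms(1), of 0 a] assms(2) by simp
  moreover have "cdf M y - cdf M (y - a) \<le> L * a"
    using cdf_increment_le[OF assms(1), of "y - a" a] assms(2,3) by simp
  ultimately show ?thesis
    by linarith
qed

lemma (in real_distribution) set_integrable_parabola:
  "set_integrable M {0..y} (\<lambda>x::real. x * (y - x))"
  unfolding set_integrable_def
proof (rule integrable_const_bound[where B = "y * y"])
  show "AE x in M. norm (indicator {0..y} x *\<^sub>R (x * (y - x))) \<le> y * y"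
    by (intro AE_I2) (auto simp: indicator_def abs_mult intro!: mult_mono)
qed simp

theorem lemma9:
  fixes \<mu> :: "real measure" and M y :: real
  assumes "real_distribution \<mu>"
    and "\<And>x t. x \<ge> 0 \<Longrightarrow> t > 0 \<Longrightarrow> cdf \<mu> (x + t) - cdf \<mu> x \<le> M * t"
    and "y \<ge> 0"
  shows "(\<integral>x\<in>{0..y}. x * (y - x) \<partial>\<mu>) \<ge> (cdf \<mu> y - cdf \<mu> 0) ^ 3 / (27 * M\<^sup>2)"
proof -
  interpret real_distribution \<mu> by fact
  define q where "q = cdf \<mu> y - cdf \<mu> 0"
  have q_le: "q \<le> M * y"
    using cdf_increment_le[OF assms(2), of 0 y] assms(3) by (simp add: q_def)
  consider "q \<le> 0" | "q > 0" "M > 0"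
    using q_le assms(3) by (metis mult_nonpos_nonneg not_le order.trans)
  then show ?thesis
  proof cases
    case 1
    have "0 \<le> (\<integral>x\<in>{0..y}. x * (y - x) \<partial>\<mu>)"
      unfolding set_lebesgue_integral_def by (rule integral_nonneg_AE) (auto simp: indicator_def)
    moreover have "q ^ 3 / (27 * M\<^sup>2) \<le> 0"
      using 1 by (simp add: divide_nonpos_nonneg)
    ultimately show ?thesis
      by (simp add: q_def)
  next
    case 2
    define a where "a = q / (3 * M)"
    have "0 \<le> a" "2 * a \<le> y" "q - 2 * M * a = q / 3"
      using 2 q_le by (auto simp: a_def field_simps)
    then have "q / 3 \<le> measure \<mu> {a<..y - a}"
      using measure_Ioc_inner_ge[OF assms(2), of a y] by (simp add: q_def)
    then have "q / 3 * a\<^sup>2 \<le> measure \<mu> {a<..y - a} * a\<^sup>2"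
      by (rule mult_right_mono) simp
    also have "\<dots> \<le> (\<integral>x\<in>{0..y}. x * (y - x) \<partial>\<mu>)"
    proof (subst mult.commute, rule const_mult_measure_le_set_integral[OF set_integrable_parabola])
      show "a\<^sup>2 \<le> x * (y - x)" if "x \<in> {a<..y - a}" for x
        using that \<open>0 \<le> a\<close> by (auto simp: power2_eq_square intro!: mult_mono)
    qed (use \<open>0 \<le> a\<close> in auto)
    finally show ?thesis
      using 2 by (simp add: q_def a_def field_simps power2_eq_square power3_eq_cube)
  qed
qed

end
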